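(* Let $n\ge2$ and let $F$ be an exponential functor with character polynomial $F(t)=\sum_{i=0}^d\mu_it^i\in\mathbb{Q}[t]$. Let $G(t)\in\mathbb{Q}[t]$ be any polynomial with $G'(t)=\frac{F(t)-F(0)}{t}$ and set $V(t_1,\dots,t_n)=\sum_{i=1}^nG(t_i)$. Regard symmetric polynomials as polynomials in the elementary symmetric polynomials $\bar c_1,\dots,\bar c_n$. Then for every $j\in\{0,\dots,n-2\}$, \[ c_{F,j}=(-1)^{n-j}\frac{\partial V}{\partial\bar c_{n-(j+1)}},\qquad\text{where } c_{F,j}=\frac{q_j}{\Delta}. \] In particular these derivatives generate the ideal $J_{F,\mathbb{Q}}=(c_{F,0},\dots,c_{F,n-2})$ in $(R_F(\mathbb{T})\otimes\mathbb{Q})^W$.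
   Context: An exponential functor is a continuous symmetric monoidal functor $F$ from finite-dimensional complex inner product spaces (unitary isomorphisms, $\oplus$) to finite-dimensional complex inner product super-vector spaces (grading-preserving unitaries, graded $\otimes$ with Koszul sign symmetry), preserving duals, such that the $S^1$-representation on $F(\mathbb{C})$ has only positive characters. Its character polynomial is $F(t)=\sum_k(\dim F(\mathbb{C})^{(k)}_{\mathrm{even}}-\dim F(\mathbb{C})^{(k)}_{\mathrm{odd}})t^k$. $\bar c_k=\sum_{i_1<\dots<i_k}t_{i_1}\cdots t_{i_k}$; $\Delta=\det(t_j^{n-k})_{k,j}$ is the Vandermonde determinant; $q_j(t_1,\dots,t_n)$ is the determinant of the $n\times n$ matrix whose first row is $(F(t_1)t_1^j,\dots,F(t_n)t_n^j)$ and whose remaining rows are $(t_1^{n-2},\dots,t_n^{n-2}),\dots,(t_1,\dots,t_n),(1,\dots,1)$; $q_j/\Delta$ is a symmetric polynomial. $R_F(\mathbb{T})=\mathbb{Z}[t_1,\dots,t_n]/(t_1\cdots t_n-1)[F(t_1)^{-1},\dots,F(t_n)^{-1}]$ with $W=S_n$ permuting the variables. *)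

theory Defs
  imports "HOL-Computational_Algebra.Polynomial" "HOL-Combinatorics.Permutations"
begin

text \<open>Points of Q^n are functions t :: nat => rat, coordinates t 1, ..., t n.\<close>

definition mdet :: "nat \<Rightarrow> (nat \<Rightarrow> nat \<Rightarrow> rat) \<Rightarrow> rat" where
  "mdet n A = (\<Sum>p | p permutes {1..n}. of_int (sign p) * (\<Prod>k=1..n. A k (p k)))"

definition vandermonde :: "nat \<Rightarrow> (nat \<Rightarrow> rat) \<Rightarrow> rat" where
  "vandermonde n t = mdet n (\<lambda>k l. t l ^ (n - k))"

definition qdet :: "rat poly \<Rightarrow> nat \<Rightarrow> nat \<Rightarrow> (nat \<Rightarrow> rat) \<Rightarrow> rat" where
  "qdet F n j t = mdet n (\<lambda>k l. if k = 1 then poly F (t l) * t l ^ j else t l ^ (n - k))"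

definition esym :: "nat \<Rightarrow> nat \<Rightarrow> (nat \<Rightarrow> rat) \<Rightarrow> rat" where
  "esym n k t = (\<Sum>S | S \<subseteq> {1..n} \<and> card S = k. \<Prod>i\<in>S. t i)"

text \<open>Multivariate polynomials over Q in the variables x_1, ..., x_n, given by their
  coefficient function on exponent vectors m :: nat => nat (finite support, exponents
  vanish outside 1..n).\<close>
definition is_mpoly :: "nat \<Rightarrow> ((nat \<Rightarrow> nat) \<Rightarrow> rat) \<Rightarrow> bool" where
  "is_mpoly n P \<longleftrightarrow> finite {m. P m \<noteq> 0} \<and> (\<forall>m. P m \<noteq> 0 \<longrightarrow> (\<forall>i. i \<notin> {1..n} \<longrightarrow> m i = 0))"

definition mpeval :: "nat \<Rightarrow> ((nat \<Rightarrow> nat) \<Rightarrow> rat) \<Rightarrow> (nat \<Rightarrow> rat) \<Rightarrow> rat" where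
  "mpeval n P x = (\<Sum>m | P m \<noteq> 0. P m * (\<Prod>i=1..n. x i ^ m i))"

definition mpderiv :: "nat \<Rightarrow> ((nat \<Rightarrow> nat) \<Rightarrow> rat) \<Rightarrow> ((nat \<Rightarrow> nat) \<Rightarrow> rat)" where
  "mpderiv k P = (\<lambda>m. of_nat (m k + 1) * P (m(k := m k + 1)))"

end

theory Submission
  imports Defs "Jordan_Normal_Form.Determinant"
begin

(* V is a polynomial in the power sums, hence, by Newton's identities, in the elementary
   symmetric functions c_k; call that polynomial P.  Moving t_i alone changes c_k at the rate
   e_(k-1)(t without t_i), the elementary symmetric function of the other n - 1 variables,
   so the chain rule gives
     G'(t_i) = sum_k e_(k-1)(t without t_i) * dP/dc_k.
   For distinct t_i this linear system is inverted by Lagrange interpolation: its inverse matrix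
   is ((-1)^(k-1) t_i^(n-k) / D_i) with D_i = prod_(m ~= i) (t_i - t_m).  The same interpolation
   expands q_j along its first row: q_j = Delta * sum_i F(t_i) t_i^j / D_i.  Since
   t G'(t) = F(t) - F(0) and sum_i t_i^j / D_i = 0 for j <= n - 2, the two sides agree.
   If two t_i coincide, q_j and Delta both vanish. *)

section \<open>Elementary symmetric functions and Newton's identities\<close>

definition esym_on :: "'i set \<Rightarrow> nat \<Rightarrow> ('i \<Rightarrow> 'a::comm_ring_1) \<Rightarrow> 'a" where
  "esym_on J k t = (\<Sum>S | S \<subseteq> J \<and> card S = k. \<Prod>i\<in>S. t i)"

lemma esym_eq_esym_on: "esym n k t = esym_on {1..n} k t"
  by (simp add: esym_def esym_on_def)

lemma esym_on_cong: "(\<And>j. j \<in> J \<Longrightarrow> t j = u j) \<Longrightarrow> esym_on J k t = esym_on J k u"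
  unfolding esym_on_def by (intro sum.cong refl prod.cong) auto

lemma esym_on_0: "finite J \<Longrightarrow> esym_on J 0 t = 1"
  unfolding esym_on_def by (simp add: card_eq_0_iff rev_finite_subset cong: conj_cong)

lemma esym_on_gt_card:
  assumes "finite J" "card J < k"
  shows "esym_on J k t = 0"
proof -
  have "card S \<noteq> k" if "S \<subseteq> J" for S
    using assms card_mono[OF assms(1) that] by linarith
  then have "{S. S \<subseteq> J \<and> card S = k} = {}"
    by blast
  then show ?thesis
    unfolding esym_on_def by (metis sum.empty)
qed

lemma prod_monom_1:
  "finite X \<Longrightarrow> (\<Prod>i\<in>X. monom (f i) 1) = monom (\<Prod>i\<in>X. f i) (card X)"
  by (induction X rule: finite_induct) (auto simp: mult_monom)

lemma esym_on_eq_coeff_prod: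
  assumes "finite J"
  shows "esym_on J k t = coeff (\<Prod>i\<in>J. [:1, t i:]) k"
proof -
  have "(\<Prod>i\<in>J. [:1, t i:]) = (\<Prod>i\<in>J. monom (t i) 1 + 1)"
    by (intro prod.cong refl) (simp add: monom_altdef one_pCons)
  also have "\<dots> = (\<Sum>X\<in>Pow J. (\<Prod>i\<in>X. monom (t i) 1) * (\<Prod>i\<in>J-X. 1))"
    by (rule prod_add[OF assms])
  also have "\<dots> = (\<Sum>X\<in>Pow J. monom (\<Prod>i\<in>X. t i) (card X))"
  proof (intro sum.cong refl)
    fix X assume "X \<in> Pow J"
    then have "finite X"
      using assms rev_finite_subset by blast
    then show "(\<Prod>i\<in>X. monom (t i) 1) * (\<Prod>i\<in>J-X. 1) = monom (\<Prod>i\<in>X. t i) (card X)"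
      using prod_monom_1[of X t] by simp
  qed
  finally have "coeff (\<Prod>i\<in>J. [:1, t i:]) k
      = (\<Sum>X\<in>Pow J. if card X = k then \<Prod>i\<in>X. t i else 0)"
    by (simp add: coeff_sum coeff_monom)
  also have "\<dots> = (\<Sum>X\<in>{X\<in>Pow J. card X = k}. \<Prod>i\<in>X. t i)"
    by (rule sum.inter_filter[symmetric]) (simp add: assms)
  also have "{X\<in>Pow J. card X = k} = {S. S \<subseteq> J \<and> card S = k}"
    by auto
  finally show ?thesis
    unfolding esym_on_def ..
qed

lemma prod_roots_eq_sum_monom:
  fixes t :: "'i \<Rightarrow> 'a::comm_ring_1"
  assumes "finite J"
  shows "(\<Prod>i\<in>J. [:- t i, 1:])
       = (\<Sum>X\<in>Pow J. monom ((-1) ^ card X * (\<Prod>i\<in>X. t i)) (card J - card X))"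
proof -
  have "(\<Prod>i\<in>J. [:- t i, 1:]) = (\<Prod>i\<in>J. [:- t i:] + monom 1 1)"
    by (intro prod.cong refl) (simp add: monom_altdef)
  also have "\<dots> = (\<Sum>X\<in>Pow J. (\<Prod>i\<in>X. [:- t i:]) * (\<Prod>i\<in>J-X. monom 1 1))"
    by (rule prod_add[OF assms])
  also have "\<dots> = (\<Sum>X\<in>Pow J. monom ((-1) ^ card X * (\<Prod>i\<in>X. t i)) (card J - card X))"
  proof (intro sum.cong refl)
    fix X assume X: "X \<in> Pow J"
    then have "finite X"
      using assms rev_finite_subset by blast
    then have const: "(\<Prod>i\<in>X. [:- t i:]) = [:(-1) ^ card X * (\<Prod>i\<in>X. t i):]"
      by (induction X rule: finite_induct) auto
    have X_power: "(\<Prod>i\<in>J-X. monom 1 1) = monom 1 (card J - card X)"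
      using X \<open>finite X\<close> assms prod_monom_1[of "J - X" "\<lambda>_. 1"]
      by (simp add: card_Diff_subset)
    have "[:c:] * monom 1 m = monom c m" for c :: 'a and m
      by (simp add: smult_monom)
    then show "(\<Prod>i\<in>X. [:- t i:]) * (\<Prod>i\<in>J-X. monom 1 1)
        = monom ((-1) ^ card X * (\<Prod>i\<in>X. t i)) (card J - card X)"
      unfolding const X_power .
  qed
  finally show ?thesis .
qed

lemma vieta_coeff_prod_roots:
  fixes t :: "'i \<Rightarrow> 'a::comm_ring_1"
  assumes "finite J" "k \<le> card J"
  shows "coeff (\<Prod>i\<in>J. [:- t i, 1:]) (card J - k) = (-1) ^ k * esym_on J k t"
proof -
  have "coeff (\<Prod>i\<in>J. [:- t i, 1:]) (card J - k)
      = (\<Sum>X\<in>Pow J. coeff (monom ((-1) ^ card X * (\<Prod>i\<in>X. t i)) (card J - card X)) (card J - k))"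
    unfolding prod_roots_eq_sum_monom[OF assms(1)] by (simp only: coeff_sum)
  also have "\<dots> = (\<Sum>X\<in>Pow J. if card X = k then (-1) ^ k * (\<Prod>i\<in>X. t i) else 0)"
    unfolding coeff_monom
  proof (intro sum.cong refl)
    fix X assume "X \<in> Pow J"
    then have "card X \<le> card J"
      using assms(1) by (simp add: card_mono)
    then have "card J - card X = card J - k \<longleftrightarrow> card X = k"
      using assms(2) by linarith
    then show "(if card J - card X = card J - k then (-1) ^ card X * (\<Prod>i\<in>X. t i) else 0)
        = (if card X = k then (-1) ^ k * (\<Prod>i\<in>X. t i) else 0)"
      by auto
  qed
  also have "\<dots> = (\<Sum>X\<in>{X\<in>Pow J. card X = k}. (-1) ^ k * (\<Prod>i\<in>X. t i))"
    by (rule sum.inter_filter[symmetric]) (simp add: assms)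
  also have "{X\<in>Pow J. card X = k} = {S. S \<subseteq> J \<and> card S = k}"
    by auto
  finally show ?thesis
    unfolding esym_on_def by (simp only: sum_distrib_left)
qed

lemma esym_on_Suc_remove:
  assumes "finite J" "i \<in> J"
  shows "esym_on J (Suc k) t = esym_on (J - {i}) (Suc k) t + t i * esym_on (J - {i}) k t"
proof -
  have "(\<Prod>j\<in>J. [:1, t j:]) = [:1, t i:] * (\<Prod>j\<in>J - {i}. [:1, t j:])"
    using assms by (simp add: prod.remove)
  then show ?thesis
    using assms by (simp add: esym_on_eq_coeff_prod coeff_pCons)
qed

lemma esym_on_fun_upd_add:
  assumes "finite J" "i \<in> J" "k \<ge> 1"
  shows "esym_on J k (t(i := t i + s)) = esym_on J k t + s * esym_on (J - {i}) (k - 1) t"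
proof -
  obtain k' where k: "k = Suc k'"
    using assms(3) by (cases k) auto
  have "esym_on (J - {i}) r (t(i := t i + s)) = esym_on (J - {i}) r t" for r
    by (rule esym_on_cong) auto
  then show ?thesis
    using esym_on_Suc_remove[OF assms(1,2), of k' "t(i := t i + s)"]
      esym_on_Suc_remove[OF assms(1,2), of k' t]
    by (simp add: k algebra_simps)
qed

lemma sum_mult_esym_on_remove:
  fixes t :: "'i \<Rightarrow> 'a::idom"
  assumes "finite J"
  shows "(\<Sum>i\<in>J. t i * esym_on (J - {i}) m t) = of_nat (Suc m) * esym_on J (Suc m) t"
proof -
  have "pderiv (\<Prod>i\<in>J. [:1, t i:]) = (\<Sum>a\<in>J. (\<Prod>i\<in>J - {a}. [:1, t i:]) * [:t a:])"
    by (simp add: pderiv_prod pderiv_pCons)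
  then have "coeff (pderiv (\<Prod>i\<in>J. [:1, t i:])) m
      = (\<Sum>a\<in>J. t a * coeff (\<Prod>i\<in>J - {a}. [:1, t i:]) m)"
    by (simp add: coeff_sum mult.commute)
  then show ?thesis
    using assms by (simp add: coeff_pderiv esym_on_eq_coeff_prod)
qed

definition power_sum :: "'i set \<Rightarrow> nat \<Rightarrow> ('i \<Rightarrow> 'a::comm_ring_1) \<Rightarrow> 'a" where
  "power_sum J m t = (\<Sum>i\<in>J. t i ^ m)"

lemma alternating_sum_esym_on_powers:
  assumes "finite J" "i \<in> J"
  shows "(\<Sum>r<Suc m. (-1) ^ r * esym_on J r t * t i ^ (Suc m - r))
       = (-1) ^ m * t i * esym_on (J - {i}) m t"
proof (induction m)
  case 0
  then show ?case
    using assms by (simp add: esym_on_0)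
next
  case (Suc m)
  have "(\<Sum>r<Suc (Suc m). (-1) ^ r * esym_on J r t * t i ^ (Suc (Suc m) - r))
      = (\<Sum>r<Suc m. (-1) ^ r * esym_on J r t * t i ^ (Suc (Suc m) - r))
        + (-1) ^ Suc m * esym_on J (Suc m) t * t i"
    by simp
  also have "(\<Sum>r<Suc m. (-1) ^ r * esym_on J r t * t i ^ (Suc (Suc m) - r))
      = t i * (\<Sum>r<Suc m. (-1) ^ r * esym_on J r t * t i ^ (Suc m - r))"
    unfolding sum_distrib_left by (intro sum.cong refl) (simp add: Suc_diff_le)
  also have "\<dots> = t i * ((-1) ^ m * t i * esym_on (J - {i}) m t)"
    by (simp only: Suc.IH)
  also have "esym_on J (Suc m) t = esym_on (J - {i}) (Suc m) t + t i * esym_on (J - {i}) m t"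
    by (rule esym_on_Suc_remove[OF assms])
  finally have "(\<Sum>r<Suc (Suc m). (-1) ^ r * esym_on J r t * t i ^ (Suc (Suc m) - r))
      = t i * ((-1) ^ m * t i * esym_on (J - {i}) m t)
        + (-1) ^ Suc m * (esym_on (J - {i}) (Suc m) t + t i * esym_on (J - {i}) m t) * t i"
    (is "_ = ?rhs") .
  moreover have "?rhs = (-1) ^ Suc m * t i * esym_on (J - {i}) (Suc m) t"
    by (simp add: algebra_simps)
  ultimately show ?case
    by (rule trans)
qed

lemma newton_identity:
  fixes t :: "'i \<Rightarrow> 'a::idom"
  assumes "finite J"
  shows "(\<Sum>r<Suc m. (-1) ^ r * esym_on J r t * power_sum J (Suc m - r) t)
       = (-1) ^ m * of_nat (Suc m) * esym_on J (Suc m) t"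
proof -
  have "(\<Sum>r<Suc m. (-1) ^ r * esym_on J r t * power_sum J (Suc m - r) t)
      = (\<Sum>i\<in>J. \<Sum>r<Suc m. (-1) ^ r * esym_on J r t * t i ^ (Suc m - r))"
    unfolding power_sum_def sum_distrib_left by (rule sum.swap)
  also have "\<dots> = (\<Sum>i\<in>J. (-1) ^ m * (t i * esym_on (J - {i}) m t))"
    using alternating_sum_esym_on_powers[OF assms] by (intro sum.cong) (simp_all add: mult.assoc)
  finally show ?thesis
    using assms by (simp add: sum_distrib_left[symmetric] sum_mult_esym_on_remove)
qed

lemma power_sum_Suc_newton:
  fixes t :: "'i \<Rightarrow> 'a::idom"
  assumes "finite J"
  shows "power_sum J (Suc k) t = (-1) ^ k * of_nat (Suc k) * esym_on J (Suc k) t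
     - (\<Sum>r=1..k. (-1) ^ r * esym_on J r t * power_sum J (Suc k - r) t)"
proof -
  define f where "f r = (-1) ^ r * esym_on J r t * power_sum J (Suc k - r) t" for r
  have "{..<Suc k} = insert 0 {1..k}"
    by auto
  then have "(\<Sum>r<Suc k. f r) = f 0 + (\<Sum>r=1..k. f r)"
    by simp
  moreover have "f 0 = power_sum J (Suc k) t"
    using assms by (simp add: f_def esym_on_0)
  moreover have "(\<Sum>r<Suc k. f r) = (-1) ^ k * of_nat (Suc k) * esym_on J (Suc k) t"
    unfolding f_def by (rule newton_identity[OF assms])
  ultimately have "power_sum J (Suc k) t
      = (-1) ^ k * of_nat (Suc k) * esym_on J (Suc k) t - (\<Sum>r=1..k. f r)"
    by (metis add_diff_cancel_right')
  then show ?thesis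
    by (simp only: f_def)
qed

section \<open>Polynomial functions of the elementary symmetric functions\<close>

lemma mpeval_eq_sum_superset:
  assumes "finite T" "{m. P m \<noteq> 0} \<subseteq> T"
  shows "mpeval n P x = (\<Sum>m\<in>T. P m * (\<Prod>i=1..n. x i ^ m i))"
  unfolding mpeval_def by (rule sum.mono_neutral_left) (use assms in auto)

lemma mpeval_cong: "(\<And>i. i \<in> {1..n} \<Longrightarrow> x i = y i) \<Longrightarrow> mpeval n P x = mpeval n P y"
  unfolding mpeval_def by (intro sum.cong refl prod.cong) auto

type_synonym mpoly_coeffs = "(nat \<Rightarrow> nat) \<Rightarrow> rat"

definition mpmult :: "mpoly_coeffs \<Rightarrow> mpoly_coeffs \<Rightarrow> mpoly_coeffs" where
  "mpmult P Q m = (\<Sum>(a, b) | P a \<noteq> 0 \<and> Q b \<noteq> 0 \<and> (\<lambda>i. a i + b i) = m. P a * Q b)"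

lemma mpmult_nonzero_imp_sum:
  assumes "mpmult P Q m \<noteq> 0"
  obtains a b where "P a \<noteq> 0" "Q b \<noteq> 0" "m = (\<lambda>i. a i + b i)"
proof -
  have "{(a, b). P a \<noteq> 0 \<and> Q b \<noteq> 0 \<and> (\<lambda>i. a i + b i) = m} \<noteq> {}"
    using assms unfolding mpmult_def by (metis (no_types, lifting) sum.empty)
  then show ?thesis
    using that by blast
qed

lemma mpmult_support_subset:
  "{m. mpmult P Q m \<noteq> 0} \<subseteq> (\<lambda>(a, b) i. a i + b i) ` ({a. P a \<noteq> 0} \<times> {b. Q b \<noteq> 0})"
proof
  fix m assume "m \<in> {m. mpmult P Q m \<noteq> 0}"
  then obtain a b where "P a \<noteq> 0" "Q b \<noteq> 0" "m = (\<lambda>i. a i + b i)"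
    using mpmult_nonzero_imp_sum by blast
  then show "m \<in> (\<lambda>(a, b) i. a i + b i) ` ({a. P a \<noteq> 0} \<times> {b. Q b \<noteq> 0})"
    by (intro image_eqI[where x = "(a, b)"]) auto
qed

lemma is_mpoly_mpmult:
  assumes "is_mpoly n P" "is_mpoly n Q"
  shows "is_mpoly n (mpmult P Q)"
  unfolding is_mpoly_def
proof (intro conjI allI impI)
  show "finite {m. mpmult P Q m \<noteq> 0}"
    using assms unfolding is_mpoly_def by (blast intro: finite_subset[OF mpmult_support_subset])
next
  fix m i assume "mpmult P Q m \<noteq> 0" "i \<notin> {1..n}"
  moreover obtain a b where "P a \<noteq> 0" "Q b \<noteq> 0" "m = (\<lambda>i. a i + b i)"
    using mpmult_nonzero_imp_sum[OF \<open>mpmult P Q m \<noteq> 0\<close>] .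
  ultimately show "m i = 0"
    using assms unfolding is_mpoly_def by simp
qed

lemma mpeval_mpmult:
  assumes "is_mpoly n P" "is_mpoly n Q"
  shows "mpeval n (mpmult P Q) x = mpeval n P x * mpeval n Q x"
proof -
  define SP where "SP = {a. P a \<noteq> 0}"
  define SQ where "SQ = {b. Q b \<noteq> 0}"
  define add where "add = (\<lambda>(a, b) (i::nat). a i + b i :: nat)"
  define X where "X = (\<lambda>m. \<Prod>i=1..n. x i ^ m i)"
  have fin: "finite SP" "finite SQ"
    using assms unfolding SP_def SQ_def is_mpoly_def by auto
  have X_add: "X (add ab) = X (fst ab) * X (snd ab)" for ab
    unfolding X_def add_def by (simp add: case_prod_beta power_add prod.distrib)
  have fiber: "mpmult P Q m = (\<Sum>ab\<in>{ab\<in>SP \<times> SQ. add ab = m}. P (fst ab) * Q (snd ab))" for m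
    unfolding mpmult_def SP_def SQ_def add_def
    by (intro sum.cong) (auto simp: case_prod_beta)
  have "mpeval n (mpmult P Q) x = (\<Sum>m\<in>add ` (SP \<times> SQ). mpmult P Q m * X m)"
    unfolding X_def add_def SP_def SQ_def
    by (rule mpeval_eq_sum_superset[OF _ mpmult_support_subset]) (use fin in \<open>simp add: SP_def SQ_def\<close>)
  also have "\<dots> = (\<Sum>m\<in>add ` (SP \<times> SQ).
      \<Sum>ab\<in>{ab\<in>SP \<times> SQ. add ab = m}. P (fst ab) * Q (snd ab) * X (add ab))"
    unfolding fiber sum_distrib_right by (intro sum.cong refl) auto
  also have "\<dots> = (\<Sum>ab\<in>SP \<times> SQ. P (fst ab) * Q (snd ab) * X (add ab))"
    by (rule sum.group) (use fin in auto)
  also have "\<dots> = (\<Sum>a\<in>SP. P a * X a) * (\<Sum>b\<in>SQ. Q b * X b)"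
    by (simp add: X_add sum_product sum.cartesian_product case_prod_beta ac_simps)
  also have "\<dots> = mpeval n P x * mpeval n Q x"
    unfolding X_def mpeval_def SP_def SQ_def ..
  finally show ?thesis .
qed

definition is_mpoly_fun_of :: "nat \<Rightarrow> ('a \<Rightarrow> nat \<Rightarrow> rat) \<Rightarrow> ('a \<Rightarrow> rat) \<Rightarrow> bool" where
  "is_mpoly_fun_of n E f \<longleftrightarrow> (\<exists>P. is_mpoly n P \<and> (\<forall>t. f t = mpeval n P (E t)))"

lemma is_mpoly_fun_of_const: "is_mpoly_fun_of n E (\<lambda>t. c)"
proof -
  define P where "P = (\<lambda>m::nat \<Rightarrow> nat. if m = (\<lambda>_. 0) then c else 0)"
  have supp: "{m. P m \<noteq> 0} \<subseteq> {\<lambda>_. 0}"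
    by (auto simp: P_def split: if_splits)
  have "is_mpoly n P"
    unfolding is_mpoly_def using supp finite_subset by (auto simp: P_def split: if_splits)
  moreover have "mpeval n P x = c" for x
    by (subst mpeval_eq_sum_superset[OF _ supp]) (auto simp: P_def)
  ultimately show ?thesis
    unfolding is_mpoly_fun_of_def by metis
qed

lemma is_mpoly_fun_of_var:
  assumes "k \<in> {1..n}"
  shows "is_mpoly_fun_of n E (\<lambda>t. E t k)"
proof -
  define d where "d = (\<lambda>i::nat. if i = k then 1 else 0 :: nat)"
  define P where "P = (\<lambda>m. if m = d then 1 else 0 :: rat)"
  have supp: "{m. P m \<noteq> 0} \<subseteq> {d}"
    by (auto simp: P_def split: if_splits)
  have "is_mpoly n P"
    unfolding is_mpoly_def using supp finite_subset assms
    by (auto simp: P_def d_def split: if_splits)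
  moreover have "mpeval n P x = x k" for x
  proof -
    have "mpeval n P x = (\<Prod>i=1..n. x i ^ d i)"
      by (subst mpeval_eq_sum_superset[OF _ supp]) (auto simp: P_def)
    also have "\<dots> = (\<Prod>i=1..n. if i = k then x i else 1)"
      by (intro prod.cong refl) (simp add: d_def)
    finally show ?thesis
      using assms by (simp add: prod.delta)
  qed
  ultimately show ?thesis
    unfolding is_mpoly_fun_of_def by metis
qed

lemma is_mpoly_fun_of_add:
  assumes "is_mpoly_fun_of n E f" "is_mpoly_fun_of n E g"
  shows "is_mpoly_fun_of n E (\<lambda>t. f t + g t)"
proof -
  obtain P Q where P: "is_mpoly n P" "\<And>t. f t = mpeval n P (E t)"
    and Q: "is_mpoly n Q" "\<And>t. g t = mpeval n Q (E t)"
    using assms unfolding is_mpoly_fun_of_def by blast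
  define T where "T = {m. P m \<noteq> 0} \<union> {m. Q m \<noteq> 0}"
  have "finite T"
    using P(1) Q(1) unfolding T_def is_mpoly_def by auto
  have supp: "{m. P m + Q m \<noteq> 0} \<subseteq> T" "{m. P m \<noteq> 0} \<subseteq> T" "{m. Q m \<noteq> 0} \<subseteq> T"
    unfolding T_def by auto
  have "is_mpoly n (\<lambda>m. P m + Q m)"
    using P(1) Q(1) finite_subset[OF supp(1) \<open>finite T\<close>]
    unfolding is_mpoly_def by (metis add.right_neutral add_0)
  moreover have "f t + g t = mpeval n (\<lambda>m. P m + Q m) (E t)" for t
    unfolding P(2) Q(2) mpeval_eq_sum_superset[OF \<open>finite T\<close> supp(1)]
      mpeval_eq_sum_superset[OF \<open>finite T\<close> supp(2)] mpeval_eq_sum_superset[OF \<open>finite T\<close> supp(3)]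
    by (simp add: sum.distrib distrib_right)
  ultimately show ?thesis
    unfolding is_mpoly_fun_of_def by blast
qed

lemma is_mpoly_fun_of_mult:
  assumes "is_mpoly_fun_of n E f" "is_mpoly_fun_of n E g"
  shows "is_mpoly_fun_of n E (\<lambda>t. f t * g t)"
  using assms is_mpoly_mpmult mpeval_mpmult unfolding is_mpoly_fun_of_def by metis

lemma is_mpoly_fun_of_sum:
  "(\<And>a. a \<in> A \<Longrightarrow> is_mpoly_fun_of n E (f a)) \<Longrightarrow> is_mpoly_fun_of n E (\<lambda>t. \<Sum>a\<in>A. f a t)"
proof (induction A rule: infinite_finite_induct)
  case (infinite A)
  then show ?case
    using is_mpoly_fun_of_const[of n E 0] by simp
next
  case empty
  then show ?case
    using is_mpoly_fun_of_const[of n E 0] by simp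
next
  case (insert a A)
  then show ?case
    using is_mpoly_fun_of_add[of n E "f a" "\<lambda>t. \<Sum>a\<in>A. f a t"] by simp
qed

lemma is_mpoly_fun_of_esym: "is_mpoly_fun_of n (\<lambda>t k. esym n k t) (esym n r)"
proof -
  consider "r = 0" | "r \<in> {1..n}" | "r > n"
    by fastforce
  then show ?thesis
  proof cases
    case 1
    then have "esym n r = (\<lambda>t. 1)"
      by (simp add: fun_eq_iff esym_eq_esym_on esym_on_0)
    then show ?thesis
      by (simp add: is_mpoly_fun_of_const)
  next
    case 2
    then show ?thesis
      using is_mpoly_fun_of_var[OF 2, of "\<lambda>t k. esym n k t"] by simp
  next
    case 3
    then have "esym n r = (\<lambda>t. 0)"
      by (simp add: fun_eq_iff esym_eq_esym_on esym_on_gt_card)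
    then show ?thesis
      by (simp add: is_mpoly_fun_of_const)
  qed
qed

lemma is_mpoly_fun_of_esym_power_sum:
  "is_mpoly_fun_of n (\<lambda>t k. esym n k t) (power_sum {1..n} m)"
proof (induction m rule: less_induct)
  case (less m)
  let ?E = "\<lambda>t k. esym n k t"
  have const_esym: "is_mpoly_fun_of n ?E (\<lambda>t. c * esym n r t)" for c r
    by (rule is_mpoly_fun_of_mult[OF is_mpoly_fun_of_const is_mpoly_fun_of_esym])
  show ?case
  proof (cases m)
    case 0
    then show ?thesis
      using is_mpoly_fun_of_const[of n ?E "of_nat n"] by (simp add: power_sum_def)
  next
    case (Suc k)
    have "is_mpoly_fun_of n ?E (\<lambda>t. (-1) ^ r * esym n r t * power_sum {1..n} (Suc k - r) t)"
      if "r \<in> {1..k}" for r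
      using is_mpoly_fun_of_mult[OF const_esym less[of "Suc k - r"]] that Suc by auto
    then have sum: "is_mpoly_fun_of n ?E
        (\<lambda>t. (-1) * (\<Sum>r=1..k. (-1) ^ r * esym n r t * power_sum {1..n} (Suc k - r) t))"
      by (intro is_mpoly_fun_of_mult[OF is_mpoly_fun_of_const] is_mpoly_fun_of_sum)
    have "power_sum {1..n} m = (\<lambda>t. ((-1) ^ k * of_nat (Suc k)) * esym n (Suc k) t
        + (-1) * (\<Sum>r=1..k. (-1) ^ r * esym n r t * power_sum {1..n} (Suc k - r) t))"
      unfolding Suc by (rule ext) (simp add: power_sum_Suc_newton esym_eq_esym_on)
    then show ?thesis
      using is_mpoly_fun_of_add[OF const_esym sum] by simp
  qed
qed

lemma is_mpoly_fun_of_esym_sum_poly: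
  "is_mpoly_fun_of n (\<lambda>t k. esym n k t) (\<lambda>t. \<Sum>i=1..n. poly G (t i))"
proof -
  have "(\<Sum>i=1..n. poly G (t i)) = (\<Sum>d\<le>degree G. coeff G d * power_sum {1..n} d t)" for t
    unfolding poly_altdef power_sum_def sum_distrib_left by (rule sum.swap)
  moreover have "is_mpoly_fun_of n (\<lambda>t k. esym n k t)
      (\<lambda>t. \<Sum>d\<le>degree G. coeff G d * power_sum {1..n} d t)"
    by (intro is_mpoly_fun_of_sum is_mpoly_fun_of_mult[OF is_mpoly_fun_of_const]
        is_mpoly_fun_of_esym_power_sum)
  ultimately show ?thesis
    by simp
qed

section \<open>The chain rule for the elementary symmetric functions\<close>

lemma inj_on_decrement_at: "inj_on (\<lambda>m::nat \<Rightarrow> nat. m(k := m k - 1)) {m. 1 \<le> m k}"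
proof (rule inj_onI)
  fix a b :: "nat \<Rightarrow> nat"
  assume "a \<in> {m. 1 \<le> m k}" "b \<in> {m. 1 \<le> m k}" and eq: "a(k := a k - 1) = b(k := b k - 1)"
  show "a = b"
  proof
    fix j
    show "a j = b j"
      using fun_cong[OF eq, of j] \<open>a \<in> _\<close> \<open>b \<in> _\<close> by (cases "j = k") auto
  qed
qed

lemma mpderiv_support_subset:
  "{m. mpderiv k P m \<noteq> 0} \<subseteq> (\<lambda>m. m(k := m k - 1)) ` {m. P m \<noteq> 0 \<and> 1 \<le> m k}"
proof
  fix m assume "m \<in> {m. mpderiv k P m \<noteq> 0}"
  then have "m(k := m k + 1) \<in> {m. P m \<noteq> 0 \<and> 1 \<le> m k}"
    unfolding mpderiv_def by auto
  moreover have "m = (m(k := m k + 1))(k := (m(k := m k + 1)) k - 1)"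
    by auto
  ultimately show "m \<in> (\<lambda>m. m(k := m k - 1)) ` {m. P m \<noteq> 0 \<and> 1 \<le> m k}"
    by blast
qed

lemma mpeval_mpderiv:
  assumes "is_mpoly n P" "k \<in> {1..n}"
  shows "mpeval n (mpderiv k P) c = (\<Sum>m | P m \<noteq> 0.
           P m * (of_nat (m k) * c k ^ (m k - 1) * (\<Prod>i\<in>{1..n} - {k}. c i ^ m i)))"
proof -
  define S where "S = {m. P m \<noteq> 0 \<and> 1 \<le> m k}"
  define lower where "lower = (\<lambda>m::nat \<Rightarrow> nat. m(k := m k - 1))"
  have "finite {m. P m \<noteq> 0}"
    using assms(1) unfolding is_mpoly_def by auto
  then have "finite S"
    unfolding S_def by (rule rev_finite_subset) auto
  have "inj_on lower S"
    using inj_on_decrement_at unfolding lower_def S_def by (rule inj_on_subset) auto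
  have "mpeval n (mpderiv k P) c = (\<Sum>m\<in>lower ` S. mpderiv k P m * (\<Prod>i=1..n. c i ^ m i))"
    unfolding lower_def S_def
    by (rule mpeval_eq_sum_superset[OF _ mpderiv_support_subset]) (use \<open>finite S\<close> in \<open>simp add: S_def\<close>)
  also have "\<dots> = (\<Sum>m\<in>S. mpderiv k P (lower m) * (\<Prod>i=1..n. c i ^ lower m i))"
    by (rule sum.reindex_cong[OF \<open>inj_on lower S\<close> refl]) simp
  also have "\<dots> = (\<Sum>m\<in>S.
      P m * (of_nat (m k) * c k ^ (m k - 1) * (\<Prod>i\<in>{1..n} - {k}. c i ^ m i)))"
  proof (rule sum.cong[OF refl])
    fix m assume m: "m \<in> S"
    then have "(lower m)(k := lower m k + 1) = m"
      unfolding lower_def S_def by auto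
    then have "mpderiv k P (lower m) = of_nat (m k) * P m"
      using m unfolding mpderiv_def lower_def S_def by auto
    moreover have "(\<Prod>i=1..n. c i ^ lower m i) = c k ^ (m k - 1) * (\<Prod>i\<in>{1..n} - {k}. c i ^ m i)"
      using assms(2) by (simp add: prod.remove lower_def)
    ultimately show "mpderiv k P (lower m) * (\<Prod>i=1..n. c i ^ lower m i)
        = P m * (of_nat (m k) * c k ^ (m k - 1) * (\<Prod>i\<in>{1..n} - {k}. c i ^ m i))"
      by simp
  qed
  also have "\<dots> = (\<Sum>m | P m \<noteq> 0.
      P m * (of_nat (m k) * c k ^ (m k - 1) * (\<Prod>i\<in>{1..n} - {k}. c i ^ m i)))"
    by (rule sum.mono_neutral_left) (use \<open>finite {m. P m \<noteq> 0}\<close> in \<open>auto simp: S_def\<close>)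
  finally show ?thesis .
qed

definition mpoly_along :: "nat \<Rightarrow> mpoly_coeffs \<Rightarrow> (nat \<Rightarrow> rat) \<Rightarrow> (nat \<Rightarrow> rat) \<Rightarrow> rat poly" where
  "mpoly_along n P c w =
     (\<Sum>m | P m \<noteq> 0. Polynomial.smult (P m) (\<Prod>i=1..n. [:c i, w i:] ^ m i))"

lemma poly_mpoly_along: "poly (mpoly_along n P c w) s = mpeval n P (\<lambda>i. c i + s * w i)"
  unfolding mpoly_along_def mpeval_def by (simp add: poly_sum poly_prod)

lemma poly_pderiv_prod_linear_powers_0:
  "finite I \<Longrightarrow> poly (pderiv (\<Prod>i\<in>I. [:c i, w i:] ^ m i)) 0 =
     (\<Sum>k\<in>I. w k * (of_nat (m k) * c k ^ (m k - 1) * (\<Prod>i\<in>I - {k}. c i ^ m i)))"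
  by (simp add: pderiv_prod poly_sum poly_prod pderiv_power pderiv_pCons ac_simps)

lemma poly_pderiv_mpoly_along_0:
  assumes "is_mpoly n P"
  shows "poly (pderiv (mpoly_along n P c w)) 0 = (\<Sum>k=1..n. w k * mpeval n (mpderiv k P) c)"
proof -
  have "poly (pderiv (mpoly_along n P c w)) 0 = (\<Sum>m | P m \<noteq> 0. P m *
      (\<Sum>k=1..n. w k * (of_nat (m k) * c k ^ (m k - 1) * (\<Prod>i\<in>{1..n} - {k}. c i ^ m i))))"
    unfolding mpoly_along_def higher_pderiv_sum[of 1, simplified]
    by (simp add: poly_sum pderiv_smult poly_pderiv_prod_linear_powers_0)
  also have "\<dots> = (\<Sum>k=1..n. w k * (\<Sum>m | P m \<noteq> 0.
      P m * (of_nat (m k) * c k ^ (m k - 1) * (\<Prod>i\<in>{1..n} - {k}. c i ^ m i))))"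
    unfolding sum_distrib_left by (subst sum.swap) (simp add: ac_simps)
  also have "\<dots> = (\<Sum>k=1..n. w k * mpeval n (mpderiv k P) c)"
    by (intro sum.cong refl) (simp add: mpeval_mpderiv[OF assms])
  finally show ?thesis .
qed

lemma pderiv_sum_poly_eq_esym_system:
  assumes P: "is_mpoly n P"
    and V: "\<And>t. (\<Sum>l=1..n. poly G (t l)) = mpeval n P (\<lambda>k. esym n k t)"
    and i: "i \<in> {1..n}"
  shows "(\<Sum>k=1..n. esym_on ({1..n} - {i}) (k - 1) t * mpeval n (mpderiv k P) (\<lambda>k. esym n k t))
       = poly (pderiv G) (t i)"
proof -
  define c where "c = (\<lambda>k. esym n k t)"
  define w where "w = (\<lambda>k. esym_on ({1..n} - {i}) (k - 1) t)"
  define C where "C = (\<Sum>l\<in>{1..n} - {i}. poly G (t l))"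
  have "poly (mpoly_along n P c w) s = poly ([:C:] + pcompose G [:t i, 1:]) s" for s
  proof -
    have "poly (mpoly_along n P c w) s = mpeval n P (\<lambda>k. esym n k (t(i := t i + s)))"
      unfolding poly_mpoly_along
    proof (rule mpeval_cong)
      fix k assume "k \<in> {1..n}"
      then show "c k + s * w k = esym n k (t(i := t i + s))"
        using esym_on_fun_upd_add[OF finite_atLeastAtMost i, of k t s]
        unfolding c_def w_def esym_eq_esym_on by simp
    qed
    also have "\<dots> = (\<Sum>l=1..n. poly G ((t(i := t i + s)) l))"
      by (rule V[symmetric])
    also have "\<dots> = poly G (t i + s) + (\<Sum>l\<in>{1..n} - {i}. poly G ((t(i := t i + s)) l))"
      using i by (simp add: sum.remove)
    also have "(\<Sum>l\<in>{1..n} - {i}. poly G ((t(i := t i + s)) l)) = C"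
      unfolding C_def by (intro sum.cong refl) auto
    finally show ?thesis
      by (simp add: poly_pcompose add.commute)
  qed
  then have "mpoly_along n P c w = [:C:] + pcompose G [:t i, 1:]"
    using poly_eq_poly_eq_iff by blast
  then have "poly (pderiv (mpoly_along n P c w)) 0 = poly (pderiv G) (t i)"
    by (simp add: pderiv_add pderiv_pcompose pderiv_pCons poly_pcompose)
  then show ?thesis
    unfolding poly_pderiv_mpoly_along_0[OF P] c_def w_def .
qed

section \<open>Lagrange interpolation\<close>

lemma sum_atLeast1_atMost_shift: "(\<Sum>k=1..n. f k) = (\<Sum>k<n. f (Suc k))"
proof -
  have "{1..n} = {Suc 0..<Suc n}"
    by auto
  then show ?thesis
    by (simp only: sum.shift_bounds_Suc_ivl lessThan_atLeast0)
qed

lemma right_inverse_imp_left_inverse: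
  fixes A B :: "nat \<Rightarrow> nat \<Rightarrow> 'a::field"
  assumes AB: "\<And>i l. i \<in> {1..n} \<Longrightarrow> l \<in> {1..n} \<Longrightarrow> (\<Sum>k=1..n. A i k * B k l) = (if i = l then 1 else 0)"
    and "k \<in> {1..n}" "l \<in> {1..n}"
  shows "(\<Sum>i=1..n. B k i * A i l) = (if k = l then 1 else 0)"
proof -
  define Am where "Am = mat n n (\<lambda>(a, b). A (Suc a) (Suc b))"
  define Bm where "Bm = mat n n (\<lambda>(a, b). B (Suc a) (Suc b))"
  have entry: "(M * N) $$ (a, b) = (\<Sum>k<n. f (Suc a) (Suc k) * g (Suc k) (Suc b))"
    if "M = mat n n (\<lambda>(a, b). f (Suc a) (Suc b))" "N = mat n n (\<lambda>(a, b). g (Suc a) (Suc b))"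
      "a < n" "b < n" for M N f g a b
  proof -
    have "(M * N) $$ (a, b) = row M a \<bullet> col N b"
      by (rule index_mult_mat(1)) (simp_all add: that)
    also have "\<dots> = (\<Sum>k=0..<n. f (Suc a) (Suc k) * g (Suc k) (Suc b))"
      unfolding scalar_prod_def using that by (intro sum.cong) auto
    finally show ?thesis
      by (simp only: lessThan_atLeast0)
  qed
  have "Am * Bm = 1\<^sub>m n"
  proof (rule eq_matI)
    fix a b assume "a < dim_row (1\<^sub>m n :: 'a mat)" "b < dim_col (1\<^sub>m n :: 'a mat)"
    then have "a < n" "b < n"
      by simp_all
    then show "(Am * Bm) $$ (a, b) = 1\<^sub>m n $$ (a, b)"
      using entry[OF Am_def Bm_def, of a b] AB[of "Suc a" "Suc b"]
      unfolding sum_atLeast1_atMost_shift by simp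
  qed (simp_all add: Am_def Bm_def)
  then have BA: "Bm * Am = 1\<^sub>m n"
    by (rule mat_mult_left_right_inverse[rotated 2]) (simp_all add: Am_def Bm_def)
  obtain a b where "k = Suc a" "l = Suc b" "a < n" "b < n"
    using assms(2,3) by (cases k; cases l) auto
  then show ?thesis
    using entry[OF Bm_def Am_def, of a b] unfolding sum_atLeast1_atMost_shift by (simp add: BA)
qed

definition lagrange_denom :: "nat \<Rightarrow> (nat \<Rightarrow> 'a::comm_ring_1) \<Rightarrow> nat \<Rightarrow> 'a" where
  "lagrange_denom n t l = (\<Prod>m\<in>{1..n} - {l}. t l - t m)"

lemma lagrange_denom_nonzero:
  fixes t :: "nat \<Rightarrow> 'a::idom"
  assumes "inj_on t {1..n}" "l \<in> {1..n}"
  shows "lagrange_denom n t l \<noteq> 0"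
  using assms unfolding lagrange_denom_def by (auto simp: inj_on_eq_iff)

lemma prod_diff_eq_sum_esym_on:
  fixes t :: "nat \<Rightarrow> 'a::comm_ring_1"
  assumes i: "i \<in> {1..n}"
  shows "(\<Prod>m\<in>{1..n} - {i}. x - t m)
       = (\<Sum>k=1..n. esym_on ({1..n} - {i}) (k - 1) t * ((-1) ^ (k - 1) * x ^ (n - k)))"
proof -
  define J where "J = {1..n} - {i}"
  define N where "N = card J"
  have "finite J"
    unfolding J_def by simp
  have n: "n = Suc N"
    using i unfolding N_def J_def by simp
  have "degree (\<Prod>m\<in>J. [:- t m, 1:]) \<le> N"
    using degree_prod_sum_le[OF \<open>finite J\<close>, of "\<lambda>m. [:- t m, 1:]"] by (simp add: N_def)
  then have "(\<Prod>m\<in>J. x - t m) = (\<Sum>d\<le>N. coeff (\<Prod>m\<in>J. [:- t m, 1:]) d * x ^ d)"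
    unfolding poly_prod[of "\<lambda>m. [:- t m, 1:]", symmetric, simplified] poly_altdef
    by (intro sum.mono_neutral_left) (auto simp: coeff_eq_0)
  also have "\<dots> = (\<Sum>k=0..N. coeff (\<Prod>m\<in>J. [:- t m, 1:]) (N - k) * x ^ (N - k))"
    by (subst sum.atLeastAtMost_rev) (simp add: atMost_atLeast0)
  also have "\<dots> = (\<Sum>k=0..N. esym_on J k t * ((-1) ^ k * x ^ (N - k)))"
    using \<open>finite J\<close> by (intro sum.cong refl) (simp add: N_def vieta_coeff_prod_roots)
  also have "\<dots> = (\<Sum>k=1..n. esym_on J (k - 1) t * ((-1) ^ (k - 1) * x ^ (n - k)))"
    unfolding n sum_atLeast1_atMost_shift by (simp add: atLeast0AtMost lessThan_Suc_atMost)
  finally show ?thesis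
    unfolding J_def .
qed

lemma sum_esym_on_powers_at_node:
  fixes t :: "nat \<Rightarrow> 'a::comm_ring_1"
  assumes "i \<in> {1..n}" "l \<in> {1..n}"
  shows "(\<Sum>k=1..n. esym_on ({1..n} - {i}) (k - 1) t * ((-1) ^ (k - 1) * t l ^ (n - k)))
       = (if i = l then lagrange_denom n t l else 0)"
  using assms unfolding prod_diff_eq_sum_esym_on[OF assms(1), symmetric] lagrange_denom_def
  by (cases "i = l") (auto intro!: prod_zero bexI[where x = l])

lemma solve_esym_system:
  fixes t :: "nat \<Rightarrow> 'a::field"
  assumes inj: "inj_on t {1..n}"
    and sys: "\<And>i. i \<in> {1..n} \<Longrightarrow> (\<Sum>k=1..n. esym_on ({1..n} - {i}) (k - 1) t * X k) = g i"
    and k: "k \<in> {1..n}"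
  shows "X k = (\<Sum>i=1..n. (-1) ^ (k - 1) * t i ^ (n - k) / lagrange_denom n t i * g i)"
proof -
  define A where "A i k = esym_on ({1..n} - {i}) (k - 1) t" for i k
  define B where "B k i = (-1) ^ (k - 1) * t i ^ (n - k) / lagrange_denom n t i" for k i
  \<comment> \<open>A B = 1 says that \<open>\<Prod>m\<noteq>i. (x - t m)\<close> vanishes at every node except \<open>t i\<close>.\<close>
  have "(\<Sum>k=1..n. A i k * B k l) = (if i = l then 1 else 0)" if "i \<in> {1..n}" "l \<in> {1..n}" for i l
    using sum_esym_on_powers_at_node[OF that, of t] lagrange_denom_nonzero[OF inj that(2)]
    unfolding A_def B_def by (simp add: sum_divide_distrib[symmetric] mult.assoc)
  note BA = right_inverse_imp_left_inverse[of n A B, OF this k]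
  have "(\<Sum>i=1..n. B k i * g i) = (\<Sum>i=1..n. B k i * (\<Sum>k'=1..n. A i k' * X k'))"
    using sys unfolding A_def by simp
  also have "\<dots> = (\<Sum>i=1..n. \<Sum>k'=1..n. B k i * A i k' * X k')"
    by (simp add: sum_distrib_left mult.assoc)
  also have "\<dots> = (\<Sum>k'=1..n. (\<Sum>i=1..n. B k i * A i k') * X k')"
    by (subst sum.swap) (simp add: sum_distrib_right)
  also have "\<dots> = (\<Sum>k'=1..n. if k = k' then X k' else 0)"
  proof (rule sum.cong[OF refl])
    fix k' assume "k' \<in> {1..n}"
    then show "(\<Sum>i=1..n. B k i * A i k') * X k' = (if k = k' then X k' else 0)"
      using BA by simp
  qed
  also have "\<dots> = X k"
    using k by simp
  finally show ?thesis
    unfolding B_def by simp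
qed

lemma sum_power_div_lagrange_denom_eq_0:
  fixes t :: "nat \<Rightarrow> 'a::field"
  assumes "inj_on t {1..n}" "j + 2 \<le> n"
  shows "(\<Sum>i=1..n. t i ^ j / lagrange_denom n t i) = 0"
proof -
  \<comment> \<open>Since \<open>e\<^sub>0 = 1\<close>, the first unit vector solves the system with right-hand side 1.\<close>
  define X :: "nat \<Rightarrow> 'a" where "X k = (if k = 1 then 1 else 0)" for k
  have "(\<Sum>k=1..n. esym_on ({1..n} - {i}) (k - 1) t * X k) = 1" if "i \<in> {1..n}" for i
  proof -
    have "(\<Sum>k=1..n. esym_on ({1..n} - {i}) (k - 1) t * X k) = (\<Sum>k=1..n. if k = 1 then 1 else 0)"
      by (intro sum.cong refl) (simp add: X_def esym_on_0)
    then show ?thesis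
      using that by simp
  qed
  moreover have "n - j \<in> {1..n}"
    using assms(2) by auto
  ultimately have "X (n - j)
      = (\<Sum>i=1..n. (-1) ^ (n - j - 1) * t i ^ (n - (n - j)) / lagrange_denom n t i * 1)"
    by (rule solve_esym_system[OF assms(1)])
  moreover have "X (n - j) = 0" "n - (n - j) = j"
    using assms(2) by (simp_all add: X_def)
  ultimately have "(-1) ^ (n - j - 1) * (\<Sum>i=1..n. t i ^ j / lagrange_denom n t i) = 0"
    by (simp add: sum_distrib_left)
  then show ?thesis
    by simp
qed

lemma lagrange_interpolation_power_basis:
  fixes t :: "nat \<Rightarrow> 'a::field"
  assumes inj: "inj_on t {1..n}" and l: "l \<in> {1..n}"
  shows "(\<Sum>r=1..n. (\<Sum>i=1..n. (-1) ^ (r - 1) * esym_on ({1..n} - {i}) (r - 1) t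
           / lagrange_denom n t i * v i) * t l ^ (n - r)) = v l"
proof -
  have "(\<Sum>r=1..n. (\<Sum>i=1..n. (-1) ^ (r - 1) * esym_on ({1..n} - {i}) (r - 1) t
          / lagrange_denom n t i * v i) * t l ^ (n - r))
      = (\<Sum>i=1..n. v i / lagrange_denom n t i *
          (\<Sum>r=1..n. esym_on ({1..n} - {i}) (r - 1) t * ((-1) ^ (r - 1) * t l ^ (n - r))))"
    unfolding sum_distrib_right sum_distrib_left by (subst sum.swap) (simp add: ac_simps)
  also have "\<dots> = (\<Sum>i=1..n. if i = l then v l else 0)"
  proof (intro sum.cong refl)
    fix i assume "i \<in> {1..n}"
    then show "v i / lagrange_denom n t i * (\<Sum>r=1..n. esym_on ({1..n} - {i}) (r - 1) t
        * ((-1) ^ (r - 1) * t l ^ (n - r))) = (if i = l then v l else 0)"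
      unfolding sum_esym_on_powers_at_node[OF \<open>i \<in> {1..n}\<close> l]
      using lagrange_denom_nonzero[OF inj l] by simp
  qed
  finally show ?thesis
    using l by simp
qed

section \<open>Determinants\<close>

lemma mdet_cong:
  assumes "\<And>k l. k \<in> {1..n} \<Longrightarrow> l \<in> {1..n} \<Longrightarrow> M k l = M' k l"
  shows "mdet n M = mdet n M'"
  unfolding mdet_def
proof (intro sum.cong refl)
  fix p assume "p \<in> {p. p permutes {1..n}}"
  then have p: "p permutes {1..n}"
    by simp
  show "of_int (sign p) * (\<Prod>k=1..n. M k (p k)) = of_int (sign p) * (\<Prod>k=1..n. M' k (p k))"
    using assms permutes_in_image[OF p] by (metis (no_types, lifting) prod.cong)
qed

lemma sign_transpose_compose:
  assumes "p permutes S" "finite S" "a \<noteq> b"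
  shows "sign (transpose a b \<circ> p) = - sign p" "sign (p \<circ> transpose a b) = - sign p"
proof -
  have "permutation p"
    using assms(1,2) by (rule permutes_imp_permutation[rotated])
  then show "sign (transpose a b \<circ> p) = - sign p" "sign (p \<circ> transpose a b) = - sign p"
    using assms(3) by (simp_all add: sign_compose permutation_swap_id sign_swap_id)
qed

lemma mdet_eq_0_if_equal_columns:
  assumes ab: "a \<in> {1..n}" "b \<in> {1..n}" "a \<noteq> b" and col: "\<And>k. M k a = M k b"
  shows "mdet n M = 0"
proof -
  define \<tau> where "\<tau> = transpose a b"
  have \<tau>: "\<tau> permutes {1..n}"
    unfolding \<tau>_def using ab by (simp add: permutes_swap_id)
  have M\<tau>: "M k (\<tau> x) = M k x" for k x
    unfolding \<tau>_def using col by (cases "x = a"; cases "x = b") auto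
  have "mdet n M = (\<Sum>p | p permutes {1..n}. of_int (sign (\<tau> \<circ> p)) * (\<Prod>k=1..n. M k ((\<tau> \<circ> p) k)))"
    unfolding mdet_def by (rule setum_permutations_compose_left[OF \<tau>])
  also have "\<dots> = (\<Sum>p | p permutes {1..n}. - (of_int (sign p) * (\<Prod>k=1..n. M k (p k))))"
  proof (intro sum.cong refl)
    fix p assume "p \<in> {p. p permutes {1..n}}"
    then have p: "p permutes {1..n}"
      by simp
    show "of_int (sign (\<tau> \<circ> p)) * (\<Prod>k=1..n. M k ((\<tau> \<circ> p) k))
        = - (of_int (sign p) * (\<Prod>k=1..n. M k (p k)))"
      using sign_transpose_compose(1)[OF p _ ab(3)] by (simp add: M\<tau> \<tau>_def[symmetric])
  qed
  also have "\<dots> = - mdet n M"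
    unfolding mdet_def by (simp add: sum_negf)
  finally show ?thesis
    by simp
qed

lemma mdet_eq_0_if_equal_rows:
  assumes ab: "a \<in> {1..n}" "b \<in> {1..n}" "a \<noteq> b" and row: "\<And>l. M a l = M b l"
  shows "mdet n M = 0"
proof -
  define \<tau> where "\<tau> = transpose a b"
  have \<tau>: "\<tau> permutes {1..n}"
    unfolding \<tau>_def using ab by (simp add: permutes_swap_id)
  have M\<tau>: "M (\<tau> k) = M k" for k
    unfolding \<tau>_def using row by (cases "k = a"; cases "k = b") auto
  have "mdet n M = (\<Sum>p | p permutes {1..n}. of_int (sign (p \<circ> \<tau>)) * (\<Prod>k=1..n. M k ((p \<circ> \<tau>) k)))"
    unfolding mdet_def by (rule sum_permutations_compose_right[OF \<tau>])
  also have "\<dots> = (\<Sum>p | p permutes {1..n}. - (of_int (sign p) * (\<Prod>k=1..n. M k (p k))))"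
  proof (intro sum.cong refl)
    fix p assume "p \<in> {p. p permutes {1..n}}"
    then have p: "p permutes {1..n}"
      by simp
    have "(\<Prod>k=1..n. M k ((p \<circ> \<tau>) k)) = (\<Prod>k=1..n. M (\<tau> k) (p (\<tau> k)))"
      by (simp add: M\<tau>)
    also have "\<dots> = (\<Prod>k=1..n. M k (p k))"
      using prod.permute[OF \<tau>, of "\<lambda>k. M k (p k)"] by (simp add: o_def)
    finally show "of_int (sign (p \<circ> \<tau>)) * (\<Prod>k=1..n. M k ((p \<circ> \<tau>) k))
        = - (of_int (sign p) * (\<Prod>k=1..n. M k (p k)))"
      using sign_transpose_compose(2)[OF p _ ab(3)] by (simp add: \<tau>_def)
  qed
  also have "\<dots> = - mdet n M"
    unfolding mdet_def by (simp add: sum_negf)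
  finally show ?thesis
    by simp
qed

lemma prod_first_row_split:
  fixes n :: nat
  assumes "1 \<le> n"
  shows "(\<Prod>k=1..n. if k = 1 then h (p k) else M k (p k)) = h (p 1) * (\<Prod>k=2..n. M k (p k))"
proof -
  have "(\<Prod>k=1..n. if k = 1 then h (p k) else M k (p k))
      = h (p 1) * (\<Prod>k=Suc 1..n. if k = 1 then h (p k) else M k (p k))"
    using assms by (simp add: prod.atLeast_Suc_atMost)
  also have "(\<Prod>k=Suc 1..n. if k = 1 then h (p k) else M k (p k)) = (\<Prod>k=2..n. M k (p k))"
    by (intro prod.cong) auto
  finally show ?thesis .
qed

lemma mdet_first_row_linear:
  assumes "1 \<le> n"
  shows "mdet n (\<lambda>k l. if k = 1 then (\<Sum>r\<in>R. a r * W r l) else M k l)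
       = (\<Sum>r\<in>R. a r * mdet n (\<lambda>k l. if k = 1 then W r l else M k l))"
proof -
  have "mdet n (\<lambda>k l. if k = 1 then (\<Sum>r\<in>R. a r * W r l) else M k l)
      = (\<Sum>p | p permutes {1..n}. \<Sum>r\<in>R.
           a r * (of_int (sign p) * (W r (p 1) * (\<Prod>k=2..n. M k (p k)))))"
    unfolding mdet_def
  proof (intro sum.cong refl)
    fix p
    show "of_int (sign p) * (\<Prod>k=1..n. if k = 1 then (\<Sum>r\<in>R. a r * W r (p k)) else M k (p k))
        = (\<Sum>r\<in>R. a r * (of_int (sign p) * (W r (p 1) * (\<Prod>k=2..n. M k (p k)))))"
      unfolding prod_first_row_split[OF assms, where h = "\<lambda>l. \<Sum>r\<in>R. a r * W r l"]
      by (simp add: sum_distrib_left sum_distrib_right ac_simps)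
  qed
  also have "\<dots> = (\<Sum>r\<in>R. a r *
      (\<Sum>p | p permutes {1..n}. of_int (sign p) * (W r (p 1) * (\<Prod>k=2..n. M k (p k)))))"
    by (subst sum.swap) (simp add: sum_distrib_left)
  also have "\<dots> = (\<Sum>r\<in>R. a r * mdet n (\<lambda>k l. if k = 1 then W r l else M k l))"
    unfolding mdet_def prod_first_row_split[OF assms] ..
  finally show ?thesis .
qed

lemma mdet_vandermonde_first_row:
  assumes inj: "inj_on t {1..n}" and "1 \<le> n"
  shows "mdet n (\<lambda>k l. if k = 1 then v l else t l ^ (n - k))
       = vandermonde n t * (\<Sum>i=1..n. v i / lagrange_denom n t i)"
proof -
  \<comment> \<open>Expand the first row in the rows \<open>t ^ (n - r)\<close>; every \<open>r \<noteq> 1\<close> then repeats a row.\<close>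
  define a where
    "a r = (\<Sum>i=1..n. (-1) ^ (r - 1) * esym_on ({1..n} - {i}) (r - 1) t / lagrange_denom n t i * v i)"
    for r
  have "mdet n (\<lambda>k l. if k = 1 then v l else t l ^ (n - k))
      = mdet n (\<lambda>k l. if k = 1 then (\<Sum>r\<in>{1..n}. a r * t l ^ (n - r)) else t l ^ (n - k))"
  proof (rule mdet_cong)
    fix k l assume "l \<in> {1..n}"
    then show "(if k = 1 then v l else t l ^ (n - k))
        = (if k = 1 then (\<Sum>r\<in>{1..n}. a r * t l ^ (n - r)) else t l ^ (n - k))"
      using lagrange_interpolation_power_basis[OF inj \<open>l \<in> {1..n}\<close>, of v] unfolding a_def by simp
  qed
  also have "\<dots> = (\<Sum>r\<in>{1..n}. a r * mdet n (\<lambda>k l. if k = 1 then t l ^ (n - r) else t l ^ (n - k)))"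
    by (rule mdet_first_row_linear[OF assms(2)])
  also have "\<dots> = (\<Sum>r\<in>{1..n}. if r = 1 then a r * vandermonde n t else 0)"
  proof (intro sum.cong refl)
    fix r assume r: "r \<in> {1..n}"
    show "a r * mdet n (\<lambda>k l. if k = 1 then t l ^ (n - r) else t l ^ (n - k))
        = (if r = 1 then a r * vandermonde n t else 0)"
    proof (cases "r = 1")
      case True
      then show ?thesis
        unfolding vandermonde_def by (simp add: if_distrib[symmetric] cong: if_cong)
    next
      case False
      then have "mdet n (\<lambda>k l. if k = 1 then t l ^ (n - r) else t l ^ (n - k)) = 0"
        using r assms(2) by (intro mdet_eq_0_if_equal_rows[of 1 n r]) auto
      then show ?thesis
        using False by simp
    qed
  qed
  also have "\<dots> = a 1 * vandermonde n t"
    using assms(2) by simp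
  also have "a 1 = (\<Sum>i=1..n. v i / lagrange_denom n t i)"
    by (simp add: a_def esym_on_0)
  finally show ?thesis
    by (simp only: mult.commute)
qed

section \<open>The partial derivatives of V\<close>

lemma mult_poly_div_X:
  fixes F :: "'a::field poly"
  shows "x * poly ((F - [:poly F 0:]) div [:0, 1:]) x = poly F x - poly F 0"
proof -
  have "[:0, 1:] dvd F - [:poly F 0:]"
    by (simp add: dvd_iff_poly_eq_0)
  then have "[:0, 1:] * ((F - [:poly F 0:]) div [:0, 1:]) = F - [:poly F 0:]"
    by (rule dvd_mult_div_cancel)
  from arg_cong[OF this, of "\<lambda>p. poly p x"] show ?thesis
    by simp
qed

lemma mpderiv_esym_eq_lagrange_sum:
  assumes G: "pderiv G = (F - [:poly F 0:]) div [:0, 1:]"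
    and P: "is_mpoly n P"
    and V: "\<And>t. (\<Sum>l=1..n. poly G (t l)) = mpeval n P (\<lambda>k. esym n k t)"
    and inj: "inj_on t {1..n}" and j: "j + 2 \<le> n"
  shows "(-1) ^ (n - j) * mpeval n (mpderiv (n - (j + 1)) P) (\<lambda>k. esym n k t)
       = (\<Sum>i=1..n. poly F (t i) * t i ^ j / lagrange_denom n t i)"
proof -
  define k where "k = n - (j + 1)"
  have "k \<in> {1..n}" "n - k = Suc j" "even ((n - j) + (k - 1))"
    using j unfolding k_def by auto
  then have sign: "(-1 :: rat) ^ (n - j) * (-1) ^ (k - 1) = 1"
    by (simp flip: power_add)
  have "mpeval n (mpderiv k P) (\<lambda>k. esym n k t)
      = (\<Sum>i=1..n. (-1) ^ (k - 1) * t i ^ (n - k) / lagrange_denom n t i * poly (pderiv G) (t i))"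
    by (rule solve_esym_system[OF inj pderiv_sum_poly_eq_esym_system[OF P V] \<open>k \<in> {1..n}\<close>])
  then have "(-1) ^ (n - j) * mpeval n (mpderiv k P) (\<lambda>k. esym n k t)
      = (\<Sum>i=1..n. (-1) ^ (n - j) * (-1) ^ (k - 1) * (t i ^ j * (t i * poly (pderiv G) (t i)))
          / lagrange_denom n t i)"
    unfolding \<open>n - k = Suc j\<close> by (simp add: sum_distrib_left ac_simps)
  also have "\<dots> = (\<Sum>i=1..n. poly F (t i) * t i ^ j / lagrange_denom n t i)
      - poly F 0 * (\<Sum>i=1..n. t i ^ j / lagrange_denom n t i)"
    unfolding sign G mult_poly_div_X
    by (simp add: sum_distrib_left sum_subtractf[symmetric] algebra_simps diff_divide_distrib)
  also have "\<dots> = (\<Sum>i=1..n. poly F (t i) * t i ^ j / lagrange_denom n t i)"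
    using sum_power_div_lagrange_denom_eq_0[OF inj j] by simp
  finally show ?thesis
    unfolding k_def .
qed

theorem proposition4p1:
  fixes n :: nat and F G :: "rat poly"
  assumes "n \<ge> 2"
    and "pderiv G = (F - [:poly F 0:]) div [:0, 1:]"
  defines "V \<equiv> (\<lambda>t. \<Sum>i=1..n. poly G (t i))"
  shows "(\<exists>P. is_mpoly n P \<and> (\<forall>t. V t = mpeval n P (\<lambda>k. esym n k t)))
       \<and> (\<forall>P. is_mpoly n P \<and> (\<forall>t. V t = mpeval n P (\<lambda>k. esym n k t)) \<longrightarrow>
            (\<forall>j \<in> {0..n-2}. \<forall>t.
               qdet F n j t = vandermonde n t *
                 ((-1) ^ (n - j) * mpeval n (mpderiv (n - (j + 1)) P) (\<lambda>k. esym n k t))))"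
proof (intro conjI allI impI ballI)
  show "\<exists>P. is_mpoly n P \<and> (\<forall>t. V t = mpeval n P (\<lambda>k. esym n k t))"
    using is_mpoly_fun_of_esym_sum_poly[of n G] unfolding is_mpoly_fun_of_def V_def .
next
  fix P j t
  assume "is_mpoly n P \<and> (\<forall>t. V t = mpeval n P (\<lambda>k. esym n k t))" and "j \<in> {0..n-2}"
  then have P: "is_mpoly n P" and V: "\<And>t. (\<Sum>l=1..n. poly G (t l)) = mpeval n P (\<lambda>k. esym n k t)"
    and j: "j + 2 \<le> n"
    using assms(1) unfolding V_def by auto
  show "qdet F n j t = vandermonde n t *
      ((-1) ^ (n - j) * mpeval n (mpderiv (n - (j + 1)) P) (\<lambda>k. esym n k t))"
  proof (cases "inj_on t {1..n}")
    case True
    then show ?thesis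
      using mdet_vandermonde_first_row[OF True, of "\<lambda>l. poly F (t l) * t l ^ j"] assms(1)
      unfolding qdet_def mpderiv_esym_eq_lagrange_sum[OF assms(2) P V True j] by simp
  next
    case False
    then obtain a b where ab: "a \<in> {1..n}" "b \<in> {1..n}" "a \<noteq> b" "t a = t b"
      unfolding inj_on_def by blast
    have "qdet F n j t = 0" "vandermonde n t = 0"
      unfolding qdet_def vandermonde_def
      by (rule mdet_eq_0_if_equal_columns[OF ab(1-3)], simp add: ab(4))+
    then show ?thesis
      by simp
  qed
qed

end
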